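(* Let $(X,d)$ be a reflexive Busemann convex geodesic metric space and let $A,B\subseteq X$ be nonempty, closed and convex, with $B$ bounded. Define $$A_0=\{x\in A : d(x,y')=\operatorname{dist}(A,B)\text{ for some } y'\in B\},\qquad B_0=\{y\in B : d(x',y)=\operatorname{dist}(A,B)\text{ for some } x'\in A\}.$$ Then $A_0$ and $B_0$ are closed, convex, bounded and nonempty.
   Context: $\operatorname{dist}(A,B)=\inf\{d(x,y):x\in A,y\in B\}$. A geodesic space is one in which any two points $x,y$ are joined by a geodesic segment (an isometric image of $[0,d(x,y)]$); a subset is convex if it contains every geodesic segment joining any two of its points. A geodesic space is Busemann convex if for any geodesics $c_1:[0,l_1]\to X$, $c_2:[0,l_2]\to X$ one has $d(c_1(tl_1),c_2(tl_2))\le (1-t)d(c_1(0),c_2(0))+t\,d(c_1(l_1),c_2(l_2))$ for all $t\in[0,1]$. A geodesic space $X$ is reflexive if every decreasing chain $\{C_\alpha\}_{\alpha\in I}$ of nonempty closed convex bounded subsets of $X$ has nonempty intersection. *)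

theory Defs
  imports "HOL-Analysis.Analysis"
begin

definition geodesic_seg :: "(real \<Rightarrow> 'a::metric_space) \<Rightarrow> 'a \<Rightarrow> 'a \<Rightarrow> bool" where
  "geodesic_seg c x y \<longleftrightarrow> c 0 = x \<and> c (dist x y) = y \<and>
     (\<forall>s\<in>{0..dist x y}. \<forall>t\<in>{0..dist x y}. dist (c s) (c t) = \<bar>s - t\<bar>)"

definition geodesic_space :: "'a::metric_space itself \<Rightarrow> bool" where
  "geodesic_space _ \<longleftrightarrow> (\<forall>x y::'a. \<exists>c. geodesic_seg c x y)"

definition geo_convex :: "'a::metric_space set \<Rightarrow> bool" where
  "geo_convex C \<longleftrightarrow> (\<forall>x\<in>C. \<forall>y\<in>C. \<forall>c. geodesic_seg c x y \<longrightarrow> c ` {0..dist x y} \<subseteq> C)"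

definition busemann_convex :: "'a::metric_space itself \<Rightarrow> bool" where
  "busemann_convex _ \<longleftrightarrow>
    (\<forall>(c1::real \<Rightarrow> 'a) x1 y1 c2 x2 y2. geodesic_seg c1 x1 y1 \<longrightarrow> geodesic_seg c2 x2 y2 \<longrightarrow>
       (\<forall>t\<in>{0..1}. dist (c1 (t * dist x1 y1)) (c2 (t * dist x2 y2))
                    \<le> (1 - t) * dist x1 x2 + t * dist y1 y2))"

definition reflexive_space :: "'a::metric_space itself \<Rightarrow> bool" where
  "reflexive_space _ \<longleftrightarrow>
    (\<forall>F::'a set set. (\<forall>C\<in>F. C \<noteq> {} \<and> closed C \<and> geo_convex C \<and> bounded C) \<longrightarrow>
        (\<forall>C\<in>F. \<forall>D\<in>F. C \<subseteq> D \<or> D \<subseteq> C) \<longrightarrow> \<Inter>F \<noteq> {})"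

end

theory Submission
  imports Defs
begin

text \<open>In a Busemann convex geodesic space the distance to a convex set is convex along
  geodesics, so its sublevel sets inside a convex set are convex; they are closed and, for
  bounded targets, bounded. Reflexivity applied to the chain of sublevel sets at levels above
  an infimum yields a point attaining that infimum. Hence nearest points to closed convex sets
  exist, \<open>A\<^sub>0\<close> and \<open>B\<^sub>0\<close> are exactly the sublevel sets at level \<open>dist(A,B)\<close> of the distance
  to \<open>B\<close> in \<open>A\<close> and to \<open>A\<close> in \<open>B\<close>, and \<open>B\<^sub>0 \<noteq> {}\<close> because \<open>infdist \<cdot> A\<close> attains its infimum
  \<open>dist(A,B)\<close> on the bounded set \<open>B\<close>.\<close>

lemma infdist_ltE:
  assumes "infdist x C < b" "C \<noteq> {}"
  obtains a where "a \<in> C" "dist x a < b"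
  using setdist_ltE[of "{x}" C b] assms by (auto simp: infdist_eq_setdist)

lemma geo_convex_singleton: "geo_convex {p}"
  unfolding geo_convex_def geodesic_seg_def by auto

lemma infdist_geodesic_convex:
  assumes geo: "geodesic_space TYPE('a::metric_space)" and bus: "busemann_convex TYPE('a)"
    and C: "C \<noteq> {}" "geo_convex C" and c: "geodesic_seg c x y" and t: "t \<in> {0..1}"
  shows "infdist (c (t * dist x y)) C \<le> (1 - t) * infdist x C + t * infdist (y::'a) C"
proof (rule field_le_epsilon)
  fix e :: real assume e: "e > 0"
  obtain a where a: "a \<in> C" "dist x a < infdist x C + e"
    using infdist_ltE[of x C "infdist x C + e"] C e by auto
  obtain b where b: "b \<in> C" "dist y b < infdist y C + e"
    using infdist_ltE[of y C "infdist y C + e"] C e by auto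
  obtain g where g: "geodesic_seg g a b" using geo unfolding geodesic_space_def by blast
  have "t * dist a b \<in> {0..dist a b}" using t by (auto intro: mult_left_le_one_le)
  then have g_in_C: "g (t * dist a b) \<in> C" using C(2) a b g unfolding geo_convex_def by blast
  have "dist (c (t * dist x y)) (g (t * dist a b)) \<le> (1 - t) * dist x a + t * dist y b"
    using bus[unfolded busemann_convex_def, rule_format, OF c g t] .
  also have "\<dots> \<le> (1 - t) * (infdist x C + e) + t * (infdist y C + e)"
    using a b t by (intro add_mono mult_left_mono) auto
  also have "\<dots> = (1 - t) * infdist x C + t * infdist y C + e" by (simp add: algebra_simps)
  finally show "infdist (c (t * dist x y)) C \<le> (1 - t) * infdist x C + t * infdist y C + e"
    using infdist_le[OF g_in_C, of "c (t * dist x y)"] by linarith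
qed

lemma geo_convex_infdist_sublevel:
  assumes geo: "geodesic_space TYPE('a::metric_space)" and bus: "busemann_convex TYPE('a)"
    and C: "C \<noteq> {}" "geo_convex C" and K: "geo_convex K"
  shows "geo_convex {z\<in>K. infdist z (C::'a set) \<le> r}"
  unfolding geo_convex_def
proof (intro ballI allI impI subsetI)
  fix x y c z
  assume x: "x \<in> {z\<in>K. infdist z C \<le> r}" and y: "y \<in> {z\<in>K. infdist z C \<le> r}"
    and c: "geodesic_seg c x y" and z: "z \<in> c ` {0..dist x y}"
  then obtain s where s: "s \<in> {0..dist x y}" "z = c s" by blast
  have "z \<in> K" using K x y c z unfolding geo_convex_def by blast
  moreover have "infdist z C \<le> r"
  proof (cases "dist x y = 0")
    case True
    then show ?thesis using s c x unfolding geodesic_seg_def by auto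
  next
    case False
    define t where "t = s / dist x y"
    have t: "t \<in> {0..1}" using s False by (auto simp: t_def)
    have "s = t * dist x y" using False by (simp add: t_def)
    then have "infdist z C \<le> (1 - t) * infdist x C + t * infdist y C"
      using infdist_geodesic_convex[OF geo bus C c t] s by simp
    also have "\<dots> \<le> (1 - t) * r + t * r"
      using x y t by (intro add_mono mult_left_mono) auto
    finally show ?thesis by (simp add: algebra_simps)
  qed
  ultimately show "z \<in> {z\<in>K. infdist z C \<le> r}" by simp
qed

lemma closed_infdist_sublevel:
  assumes "closed K" shows "closed {z\<in>K. infdist z C \<le> r}"
proof -
  have "closed {z. infdist z C \<le> r}" by (intro closed_Collect_le continuous_intros)
  then show ?thesis using closed_Int[OF assms] by (simp add: Collect_conj_eq)
qed

lemma bounded_infdist_sublevel: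
  assumes "bounded C" "C \<noteq> {}" shows "bounded {z. infdist z C \<le> r}"
proof -
  obtain c R where R: "C \<subseteq> cball c R" using assms(1) bounded_subset_cball by blast
  have "{z. infdist z C \<le> r} \<subseteq> cball c (R + r + 1)"
  proof
    fix z assume "z \<in> {z. infdist z C \<le> r}"
    then obtain a where "a \<in> C" "dist z a < r + 1" using infdist_ltE[of z C "r + 1"] assms(2) by auto
    then show "z \<in> cball c (R + r + 1)" using R dist_triangle[of c z a] by (auto simp: dist_commute)
  qed
  then show ?thesis using bounded_subset bounded_cball by blast
qed

lemma reflexive_infdist_attains_inf:
  assumes geo: "geodesic_space TYPE('a::metric_space)" and bus: "busemann_convex TYPE('a)"
    and refl: "reflexive_space TYPE('a)"
    and K: "closed K" "geo_convex K" and D: "D \<noteq> {}" "geo_convex D"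
    and bounded: "\<And>s. bounded {z\<in>K. infdist z D \<le> s}"
    and approx: "\<And>s. s > r \<Longrightarrow> \<exists>z\<in>K. infdist z (D::'a set) \<le> s"
  obtains q where "q \<in> K" "infdist q D \<le> r"
proof -
  define S where "S s = {z\<in>K. infdist z D \<le> s}" for s
  have "\<Inter>(S ` {r<..}) \<noteq> {}"
    using refl unfolding reflexive_space_def
  proof (elim allE impE)
    show "\<forall>C\<in>S ` {r<..}. C \<noteq> {} \<and> closed C \<and> geo_convex C \<and> bounded C"
      using approx closed_infdist_sublevel[OF K(1)] geo_convex_infdist_sublevel[OF geo bus D K(2)]
        bounded by (fastforce simp: S_def)
    show "\<forall>C\<in>S ` {r<..}. \<forall>D\<in>S ` {r<..}. C \<subseteq> D \<or> D \<subseteq> C"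
      by (auto simp: S_def)
  qed
  then obtain q where q: "\<And>s. s > r \<Longrightarrow> q \<in> S s" by auto
  have "q \<in> K" using q[of "r + 1"] by (simp add: S_def)
  moreover have "infdist q D \<le> r"
    by (rule field_le_epsilon) (use q in \<open>auto simp: S_def\<close>)
  ultimately show ?thesis using that by blast
qed

lemma reflexive_nearest_point:
  assumes geo: "geodesic_space TYPE('a::metric_space)" and bus: "busemann_convex TYPE('a)"
    and refl: "reflexive_space TYPE('a)" and C: "C \<noteq> {}" "closed C" "geo_convex C"
  obtains q where "q \<in> C" "dist (p::'a) q = infdist p C"
proof -
  obtain q where q: "q \<in> C" "infdist q {p} \<le> infdist p C"
  proof (rule reflexive_infdist_attains_inf[OF geo bus refl C(2,3) _ geo_convex_singleton])
    fix s show "bounded {z\<in>C. infdist z {p} \<le> s}"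
      by (rule bounded_subset[OF bounded_cball[of p s]]) (auto simp: dist_commute)
  next
    fix s assume "s > infdist p C"
    then obtain a where "a \<in> C" "dist p a < s" using infdist_ltE C(1) by blast
    then show "\<exists>z\<in>C. infdist z {p} \<le> s" by (auto simp: dist_commute intro: less_imp_le)
  qed auto
  with infdist_le[OF q(1), of p] have "dist p q = infdist p C" by (simp add: dist_commute)
  with q(1) that show ?thesis by blast
qed

lemma proximal_set_eq_infdist_sublevel:
  assumes geo: "geodesic_space TYPE('a::metric_space)" and bus: "busemann_convex TYPE('a)"
    and refl: "reflexive_space TYPE('a)" and B: "B \<noteq> {}" "closed B" "geo_convex B"
  shows "{x\<in>A. \<exists>y\<in>B. dist x y = setdist A B} = {x\<in>A. infdist x (B::'a set) \<le> setdist A B}"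
proof safe
  fix x y assume "x \<in> A" "y \<in> B" "dist x y = setdist A B"
  then show "infdist x B \<le> setdist A B" using infdist_le[of y B x] by simp
next
  fix x assume x: "x \<in> A" "infdist x B \<le> setdist A B"
  obtain q where q: "q \<in> B" "dist x q = infdist x B"
    using reflexive_nearest_point[OF geo bus refl B] by blast
  with x setdist_le_dist[OF x(1) q(1)] show "\<exists>y\<in>B. dist x y = setdist A B" by force
qed

theorem mainTheorem1:
  fixes A B :: "'a::metric_space set"
  assumes "geodesic_space TYPE('a)" and "busemann_convex TYPE('a)" and "reflexive_space TYPE('a)"
    and "A \<noteq> {}" "closed A" "geo_convex A"
    and "B \<noteq> {}" "closed B" "geo_convex B" "bounded B"
  defines "A0 \<equiv> {x\<in>A. \<exists>y'\<in>B. dist x y' = setdist A B}"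
    and "B0 \<equiv> {y\<in>B. \<exists>x'\<in>A. dist x' y = setdist A B}"
  shows "closed A0 \<and> geo_convex A0 \<and> bounded A0 \<and> A0 \<noteq> {} \<and>
         closed B0 \<and> geo_convex B0 \<and> bounded B0 \<and> B0 \<noteq> {}"
proof -
  note space = assms(1-3)
  have A0_eq: "A0 = {x\<in>A. infdist x B \<le> setdist A B}"
    unfolding A0_def by (rule proximal_set_eq_infdist_sublevel[OF space assms(7-9)])
  have "B0 = {y\<in>B. \<exists>x\<in>A. dist y x = setdist B A}"
    unfolding B0_def by (simp add: dist_commute setdist_sym)
  also have "\<dots> = {y\<in>B. infdist y A \<le> setdist B A}"
    by (rule proximal_set_eq_infdist_sublevel[OF space assms(4-6)])
  finally have B0_eq: "B0 = {y\<in>B. infdist y A \<le> setdist A B}" by (simp add: setdist_sym)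
  obtain y where "y \<in> B" "infdist y A \<le> setdist A B"
  proof (rule reflexive_infdist_attains_inf[OF space assms(8,9,4,6)])
    fix s show "bounded {z\<in>B. infdist z A \<le> s}" using assms(10) by (rule bounded_subset) auto
  next
    fix s assume "s > setdist A B"
    then obtain a b where "a \<in> A" "b \<in> B" "dist a b < s" using setdist_ltE assms(4,7) by blast
    then show "\<exists>z\<in>B. infdist z A \<le> s" using infdist_le2[of a A b s] by (auto simp: dist_commute)
  qed
  then have "B0 \<noteq> {}" unfolding B0_eq by blast
  then have "A0 \<noteq> {}" unfolding A0_def B0_def by blast
  moreover have "bounded A0"
    using bounded_infdist_sublevel[OF assms(10,7)] by (rule bounded_subset) (auto simp: A0_eq)
  moreover have "bounded B0" using assms(10) by (rule bounded_subset) (auto simp: B0_def)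
  ultimately show ?thesis using \<open>B0 \<noteq> {}\<close> unfolding A0_eq B0_eq
    by (simp add: closed_infdist_sublevel assms(5,8)
        geo_convex_infdist_sublevel[OF space(1,2) assms(7,9,6)]
        geo_convex_infdist_sublevel[OF space(1,2) assms(4,6,9)])
qed

end
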